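(* Let $G$ be a finite group and $G^- = \{ g \in G : \langle g \rangle \text{ is not a maximal cyclic subgroup of } G\}$. If $G^-$ is a subgroup of $G$, then every element of $G$ has prime power order.
   Context: A cyclic subgroup $C$ of $G$ is maximal cyclic if there is no cyclic subgroup $D$ of $G$ with $C < D$. *)

theory Defs
  imports "HOL-Algebra.Algebra"
begin

definition cyclic_subgroup :: "('a, 'b) monoid_scheme \<Rightarrow> 'a set \<Rightarrow> bool" where
  "cyclic_subgroup G C \<longleftrightarrow> subgroup C G \<and> (\<exists>x \<in> carrier G. C = generate G {x})"

definition maximal_cyclic_subgroup :: "('a, 'b) monoid_scheme \<Rightarrow> 'a set \<Rightarrow> bool" where
  "maximal_cyclic_subgroup G C \<longleftrightarrow>
     cyclic_subgroup G C \<and> \<not> (\<exists>D. cyclic_subgroup G D \<and> C \<subset> D)"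

definition non_max_cyclic_elems :: "('a, 'b) monoid_scheme \<Rightarrow> 'a set" where
  "non_max_cyclic_elems G = {g \<in> carrier G. \<not> maximal_cyclic_subgroup G (generate G {g})}"

end

theory Submission
  imports Defs
begin

text \<open>Suppose some element has an order \<open>n\<close> that is not a prime power, and write
\<open>n = p\<^sup>k m\<close> with \<open>p\<close> prime, \<open>m > 1\<close> and \<open>p\<close> coprime to \<open>m\<close>. Then \<open>\<langle>g\<^sup>p\<rangle>\<close> and \<open>\<langle>g\<^sup>m\<rangle>\<close>
are proper subgroups of the cyclic group \<open>\<langle>g\<rangle>\<close>, so \<open>g\<^sup>p, g\<^sup>m \<in> G\<^sup>-\<close>; as \<open>G\<^sup>-\<close> is a
subgroup and \<open>g\<close> is a product of powers of \<open>g\<^sup>p\<close> and \<open>g\<^sup>m\<close> (Bezout), also \<open>g \<in> G\<^sup>-\<close>.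
Hence \<open>\<langle>g\<rangle> \<subset> \<langle>h\<rangle>\<close> for some \<open>h\<close>, and the order of \<open>h\<close> is a proper multiple of \<open>n\<close>,
so again not a prime power. Starting from an element of maximal such order gives a
contradiction.\<close>

lemma not_prime_power_imp_coprime_divisors:
  fixes n :: nat
  assumes "\<not> (\<exists>p k. Factorial_Ring.prime p \<and> n = p ^ k)" and "n \<noteq> 0"
  obtains p m where "Factorial_Ring.prime p" "p dvd n" "m dvd n" "1 < m" "coprime p m"
proof -
  have "n \<noteq> 1"
    using assms(1) by (metis power_0 two_is_prime_nat)
  then obtain p where p: "Factorial_Ring.prime p" "p dvd n"
    using prime_factor_nat by blast
  define m where "m = n div p ^ multiplicity p n"
  have n_eq: "n = p ^ multiplicity p n * m"
    unfolding m_def by (simp add: multiplicity_dvd)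
  have "\<not> p dvd m"
    unfolding m_def using multiplicity_decompose[of n p] assms(2) prime_gt_1_nat[OF p(1)] by simp
  then have "coprime p m"
    using p(1) by (simp add: prime_imp_coprime)
  moreover have "m \<noteq> 0" and "m \<noteq> 1"
    using n_eq assms p(1) by (metis mult_0_right, metis mult.right_neutral)
  ultimately show thesis
    using that p n_eq by (metis dvd_triv_right less_one linorder_neqE_nat)
qed

context group
begin

lemma cyclic_subgroup_generate:
  "g \<in> carrier G \<Longrightarrow> cyclic_subgroup G (generate G {g})"
  unfolding cyclic_subgroup_def using generate_is_subgroup by auto

lemma ord_dvd_of_mem_generate:
  assumes "finite (carrier G)" and h: "h \<in> carrier G" and "g \<in> generate G {h}"
  shows "ord g dvd ord h"
proof -
  obtain k :: nat where "g = h [^] k"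
    using assms generate_pow_on_finite_carrier by blast
  then show ?thesis
    using ord_pow_gen[OF h, of k] by (metis dvd_div_mult_self dvd_triv_left gcd_dvd1 one_dvd)
qed

lemma mem_subgroup_if_coprime_pows:
  fixes a b :: nat
  assumes "subgroup H G" and g: "g \<in> carrier G" and "coprime a b"
    and "g [^] a \<in> H" and "g [^] b \<in> H"
  shows "g \<in> H"
proof -
  obtain u v :: int where uv: "u * int a + v * int b = 1"
    using bezout_int[of "int a" "int b"] \<open>coprime a b\<close> by (metis coprime_int_iff coprime_iff_gcd_eq_1)
  have "g = g [^] (u * int a + v * int b)"
    using uv g by simp
  also have "\<dots> = (g [^] int a) [^] u \<otimes> (g [^] int b) [^] v"
    using g by (simp add: int_pow_mult int_pow_pow mult.commute)
  also have "\<dots> = (g [^] a) [^] u \<otimes> (g [^] b) [^] v"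
    by (simp add: int_pow_int)
  finally show ?thesis
    using assms subgroup_int_pow_closed subgroup.m_closed by metis
qed

lemma generate_pow_psubset:
  assumes "finite (carrier G)" and g: "g \<in> carrier G" and "d dvd ord g" and "1 < d"
  shows "generate G {g [^] d} \<subset> generate G {g}"
proof -
  have "g [^] d \<in> generate G {g}"
    using generate_pow[OF g] by (metis (mono_tags, lifting) UNIV_I mem_Collect_eq int_pow_int)
  then have sub: "generate G {g [^] d} \<subseteq> generate G {g}"
    using g by (intro generate_subgroup_incl) (auto intro: generate_is_subgroup)
  have "ord (g [^] d) < ord g"
    using ord_pow[OF g] ord_ge_1[OF assms(1) g] assms(3,4) by simp
  then have "card (generate G {g [^] d}) \<noteq> card (generate G {g})"
    using g by (simp flip: generate_pow_card)
  then show ?thesis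
    using sub by auto
qed

lemma pow_mem_non_max_cyclic_elems:
  assumes "finite (carrier G)" and g: "g \<in> carrier G" and "d dvd ord g" and "1 < d"
  shows "g [^] d \<in> non_max_cyclic_elems G"
  using generate_pow_psubset[OF assms] cyclic_subgroup_generate[OF g] g
  unfolding non_max_cyclic_elems_def maximal_cyclic_subgroup_def by auto

lemma mem_non_max_cyclic_elems_if_not_prime_power:
  assumes fin: "finite (carrier G)" and "subgroup (non_max_cyclic_elems G) G"
    and g: "g \<in> carrier G" and "\<not> (\<exists>p k. Factorial_Ring.prime p \<and> ord g = p ^ k)"
  shows "g \<in> non_max_cyclic_elems G"
proof -
  have "ord g \<noteq> 0"
    using ord_ge_1[OF fin g] by simp
  then obtain p m where "Factorial_Ring.prime p" "p dvd ord g" "m dvd ord g" "1 < m" "coprime p m"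
    using not_prime_power_imp_coprime_divisors assms(4) by metis
  then show ?thesis
    using mem_subgroup_if_coprime_pows[OF assms(2) g] pow_mem_non_max_cyclic_elems[OF fin g]
    by (meson prime_gt_1_nat)
qed

lemma non_max_cyclic_elems_ord_extends:
  assumes fin: "finite (carrier G)" and "g \<in> non_max_cyclic_elems G"
  obtains h where "h \<in> carrier G" "ord g < ord h" "ord g dvd ord h"
proof -
  have g: "g \<in> carrier G"
    using assms(2) unfolding non_max_cyclic_elems_def by simp
  obtain D where "cyclic_subgroup G D" and psub_D: "generate G {g} \<subset> D"
    using assms(2) cyclic_subgroup_generate[OF g]
    unfolding non_max_cyclic_elems_def maximal_cyclic_subgroup_def by auto
  then obtain h where h: "h \<in> carrier G" and "D = generate G {h}"
    unfolding cyclic_subgroup_def by auto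
  with psub_D have psub: "generate G {g} \<subset> generate G {h}"
    by simp
  have "finite (generate G {h})"
    using fin h generate_incl[of "{h}"] finite_subset by auto
  then have "ord g < ord h"
    using psubset_card_mono[OF _ psub] g h by (simp flip: generate_pow_card)
  moreover have "ord g dvd ord h"
    using psub generate.incl[of g "{g}"] ord_dvd_of_mem_generate[OF fin h] by blast
  ultimately show thesis
    using that h by blast
qed

end

theorem lemma3p3:
  fixes G :: "('a, 'b) monoid_scheme"
  assumes "group G" and "finite (carrier G)"
    and "subgroup (non_max_cyclic_elems G) G"
  shows "\<forall>g \<in> carrier G. \<exists>(p::nat) k. Factorial_Ring.prime p \<and> group.ord G g = p ^ k"
proof (rule ccontr)
  interpret group G by fact
  define S where "S = {g \<in> carrier G. \<not> (\<exists>p k. Factorial_Ring.prime p \<and> ord g = p ^ k)}"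
  assume "\<not> ?thesis"
  then have "S \<noteq> {}"
    unfolding S_def by blast
  moreover have "finite S"
    using assms(2) unfolding S_def by simp
  ultimately have "Max (ord ` S) \<in> ord ` S"
    by simp
  then obtain g where g: "g \<in> S" and g_max: "ord g = Max (ord ` S)"
    by (metis imageE)
  then have "g \<in> non_max_cyclic_elems G"
    using mem_non_max_cyclic_elems_if_not_prime_power[OF assms(2,3)] unfolding S_def by blast
  then obtain h where h: "h \<in> carrier G" "ord g < ord h" "ord g dvd ord h"
    using non_max_cyclic_elems_ord_extends[OF assms(2)] by blast
  have "h \<notin> S"
  proof
    assume "h \<in> S"
    then have "ord h \<le> Max (ord ` S)"
      using \<open>finite S\<close> by simp
    then show False
      using h(2) g_max by simp
  qed
  then obtain p k where p: "Factorial_Ring.prime p" and "ord h = p ^ k"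
    using h(1) unfolding S_def by blast
  then obtain i where "ord g = p ^ i"
    using h(3) divides_primepow_nat by metis
  then show False
    using g p unfolding S_def by blast
qed

end
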